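(* Let $c\in C([0,1])$ with $c>0$ on $[0,1]$, and let $c^*=\max_{[0,1]}c$. For every $s>0$ and all $m_1,m_2\in C^1([0,1])$, $$\big|\lambda(s,m_1)-\lambda(s,m_2)\big|\le c^*\Big(e^{4s\|m_1-m_2\|_{C([0,1])}}-1\Big).$$
   Context: Fix an integer $d\ge1$. For $m\in C^1([0,1])$ and $s>0$, $\lambda(s,m)$ denotes the principal eigenvalue of $-\varphi''-\frac{d-1}{r}\varphi'-2s\,m'(r)\varphi'+c(r)\varphi=\lambda\varphi$ on $(0,1)$, $\varphi'(0)=\varphi'(1)=0$; equivalently $\lambda(s,m)=\min\{\int_0^1 r^{d-1}e^{2sm}(|\varphi'|^2+c\varphi^2)dr:\ \varphi\in H^1((0,1)),\ \int_0^1 r^{d-1}e^{2sm}\varphi^2dr=1\}$. $\|\cdot\|_{C([0,1])}$ is the sup norm. *)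

theory Defs
  imports "HOL-Analysis.Analysis"
begin

definition C1_01 :: "(real \<Rightarrow> real) \<Rightarrow> bool" where
  "C1_01 m \<longleftrightarrow> (\<exists>m'. continuous_on {0..1} m' \<and>
      (\<forall>x\<in>{0..1}. (m has_real_derivative m' x) (at x within {0..1})))"

definition L2_01 :: "(real \<Rightarrow> real) \<Rightarrow> bool" where
  "L2_01 f \<longleftrightarrow> set_borel_measurable lborel {0<..<1} f \<and>
      set_integrable lborel {0<..<1} (\<lambda>x. (f x)\<^sup>2)"

definition test_fun_01 :: "(real \<Rightarrow> real) \<Rightarrow> bool" where
  "test_fun_01 \<psi> \<longleftrightarrow> \<psi> C1_differentiable_on UNIV \<and>
      (\<exists>a b. 0 < a \<and> a \<le> b \<and> b < 1 \<and> (\<forall>x. x \<notin> {a..b} \<longrightarrow> \<psi> x = 0))"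

text \<open>g is a weak derivative of \<phi> on (0,1), and both lie in L^2: \<phi> \<in> H^1((0,1)), \<phi>' = g.\<close>
definition H1_weak_deriv :: "(real \<Rightarrow> real) \<Rightarrow> (real \<Rightarrow> real) \<Rightarrow> bool" where
  "H1_weak_deriv \<phi> g \<longleftrightarrow> L2_01 \<phi> \<and> L2_01 g \<and>
      (\<forall>\<psi>. test_fun_01 \<psi> \<longrightarrow>
         (LINT x:{0<..<1}|lborel. \<phi> x * deriv \<psi> x) = - (LINT x:{0<..<1}|lborel. g x * \<psi> x))"

text \<open>Principal eigenvalue via the variational characterization.\<close>
definition princ_eig :: "nat \<Rightarrow> (real \<Rightarrow> real) \<Rightarrow> real \<Rightarrow> (real \<Rightarrow> real) \<Rightarrow> real" where
  "princ_eig d c s m = Inf {(LINT r:{0<..<1}|lborel. r ^ (d - 1) * exp (2 * s * m r) * ((g r)\<^sup>2 + c r * (\<phi> r)\<^sup>2))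
     | \<phi> g. H1_weak_deriv \<phi> g \<and>
           (LINT r:{0<..<1}|lborel. r ^ (d - 1) * exp (2 * s * m r) * (\<phi> r)\<^sup>2) = 1}"

definition sup_norm_01 :: "(real \<Rightarrow> real) \<Rightarrow> real" where
  "sup_norm_01 f = Sup ((\<lambda>x. \<bar>f x\<bar>) ` {0..1})"

end

theory Submission
  imports Defs
begin

(* Both eigenvalues are infima of Rayleigh quotients over the same H^1 functions; only the weight
   r^(d-1) e^(2 s m(r)) depends on m. If |m1 - m2| <= delta on [0,1], the two weights differ by a
   factor between e^(-2 s delta) and e^(2 s delta), so every Rayleigh quotient for m2 is at most
   e^(4 s delta) times the one for m1, and lambda(s,m2) <= e^(4 s delta) lambda(s,m1).
   Testing with constants gives lambda(s,m1) <= c^*, hence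
   lambda(s,m2) - lambda(s,m1) <= (e^(4 s delta) - 1) lambda(s,m1) <= (e^(4 s delta) - 1) c^*. *)

lemma set_borel_measurable_continuous_on_01:
  fixes f :: "real \<Rightarrow> real"
  assumes "continuous_on {0..1} f"
  shows "set_borel_measurable lborel {0<..<1} f"
proof -
  have "continuous_on {0<..<1} f" using assms by (rule continuous_on_subset) auto
  then show ?thesis
    using set_measurable_continuous_on[of "{0<..<1::real}" f] by (simp add: set_borel_measurable_def)
qed

lemma set_integrable_continuous_on_01:
  fixes f :: "real \<Rightarrow> real"
  assumes "continuous_on {0..1} f"
  shows "set_integrable lborel {0<..<1} f"
proof -
  have "set_integrable lborel {0..1::real} f"
    unfolding set_integrable_def using assms by (intro borel_integrable_compact) auto
  then show ?thesis by (rule set_integrable_subset) auto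
qed

lemma set_borel_measurable_mult:
  fixes f g :: "'a \<Rightarrow> real"
  assumes "set_borel_measurable M A f" "set_borel_measurable M A g"
  shows "set_borel_measurable M A (\<lambda>x. f x * g x)"
proof -
  have "(\<lambda>x. indicator A x *\<^sub>R (f x * g x)) = (\<lambda>x. (indicator A x *\<^sub>R f x) * (indicator A x *\<^sub>R g x))"
    by (auto simp: indicator_def)
  then show ?thesis using assms unfolding set_borel_measurable_def by simp
qed

lemma set_integrable_bounded_mult:
  fixes f h :: "'a \<Rightarrow> real"
  assumes f: "set_integrable M A f" and h: "set_borel_measurable M A h"
    and bound: "\<And>x. x \<in> A \<Longrightarrow> \<bar>h x\<bar> \<le> K"
  shows "set_integrable M A (\<lambda>x. h x * f x)"
proof (rule set_integrable_bound)
  show "set_integrable M A (\<lambda>x. K * f x)" using f by blast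
  have "set_borel_measurable M A f"
    using f unfolding set_integrable_def set_borel_measurable_def by (rule borel_measurable_integrable)
  then show "set_borel_measurable M A (\<lambda>x. h x * f x)"
    using h by (rule set_borel_measurable_mult[rotated])
  show "AE x in M. x \<in> A \<longrightarrow> norm (h x * f x) \<le> norm (K * f x)"
  proof (rule AE_I2, intro impI)
    fix x assume "x \<in> A"
    then have "\<bar>h x\<bar> \<le> \<bar>K\<bar>" using bound by force
    then show "norm (h x * f x) \<le> norm (K * f x)" by (simp add: abs_mult mult_right_mono)
  qed
qed

lemma set_integrable_continuous_on_mult_01:
  fixes f h :: "real \<Rightarrow> real"
  assumes "continuous_on {0..1} h" "set_integrable lborel {0<..<1} f"
  shows "set_integrable lborel {0<..<1} (\<lambda>x. h x * f x)"
proof -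
  have "bounded (h ` {0..1})"
    using assms(1) by (intro compact_imp_bounded compact_continuous_image) auto
  then obtain K where "\<forall>x\<in>{0..1}. \<bar>h x\<bar> \<le> K" unfolding bounded_iff by auto
  then show ?thesis
    using assms by (intro set_integrable_bounded_mult set_borel_measurable_continuous_on_01) auto
qed

lemma set_integral_pos_01:
  fixes w :: "real \<Rightarrow> real"
  assumes "continuous_on {0..1} w" "\<And>x. x \<in> {0<..<1} \<Longrightarrow> 0 < w x"
  shows "0 < (LINT x:{0<..<1}|lborel. w x)"
proof -
  have int: "set_integrable lborel {0<..<1} w"
    using assms(1) by (rule set_integrable_continuous_on_01)
  have "(LINT x:{0<..<1::real}|lborel. 0) \<le> (LINT x:{0<..<1}|lborel. w x)"
    by (rule set_integral_mono) (use int assms(2) in \<open>auto simp: set_integrable_def less_imp_le\<close>)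
  moreover have "(LINT x:{0<..<1}|lborel. w x) \<noteq> 0"
  proof
    assume zero: "(LINT x:{0<..<1}|lborel. w x) = 0"
    define v where "v = (\<lambda>x. indicator {0<..<1::real} x *\<^sub>R w x)"
    have "(LINT x:{0<..<1}|lborel. v x) = (LINT x:{0<..<1}|lborel. w x)"
      unfolding v_def set_lebesgue_integral_def by (rule Bochner_Integration.integral_cong) (auto simp: indicator_def)
    then have "{0<..<1::real} \<in> null_sets lborel"
      using int assms(2) zero unfolding set_integrable_def
      by (intro null_if_pos_func_has_zero_int[of _ v]) (auto simp: v_def)
    then show False by (simp add: null_sets_def)
  qed
  ultimately show ?thesis by simp
qed

lemma C1_01_imp_continuous_on: "C1_01 m \<Longrightarrow> continuous_on {0..1} m"
  unfolding C1_01_def continuous_on_eq_continuous_within using DERIV_continuous by blast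

lemma continuous_on_compact_le_Sup:
  fixes f :: "'a::topological_space \<Rightarrow> real"
  assumes "compact S" "continuous_on S f" "x \<in> S"
  shows "f x \<le> Sup (f ` S)"
  using assms
  by (intro cSup_upper imageI bounded_imp_bdd_above compact_imp_bounded compact_continuous_image)

lemma abs_le_sup_norm_01:
  assumes "continuous_on {0..1} f" "x \<in> {0..1}"
  shows "\<bar>f x\<bar> \<le> sup_norm_01 f"
  unfolding sup_norm_01_def
  using assms by (intro continuous_on_compact_le_Sup continuous_intros) auto

lemma L2_01_scale:
  assumes "L2_01 f"
  shows "L2_01 (\<lambda>x. a * f x)"
proof -
  have "(\<lambda>x. indicator {0<..<1::real} x *\<^sub>R (a * f x)) = (\<lambda>x. a * (indicator {0<..<1} x *\<^sub>R f x))"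
    by (auto simp: indicator_def)
  then have "set_borel_measurable lborel {0<..<1} (\<lambda>x. a * f x)"
    using assms unfolding L2_01_def set_borel_measurable_def by (simp add: borel_measurable_times)
  moreover have "set_integrable lborel {0<..<1} (\<lambda>x. (a * f x)\<^sup>2)"
    using assms unfolding L2_01_def by (simp add: power_mult_distrib)
  ultimately show ?thesis unfolding L2_01_def by simp
qed

lemma H1_weak_deriv_scale:
  assumes "H1_weak_deriv \<phi> g"
  shows "H1_weak_deriv (\<lambda>x. a * \<phi> x) (\<lambda>x. a * g x)"
  using assms L2_01_scale unfolding H1_weak_deriv_def by (simp add: mult.assoc)

lemma test_fun_01_integral_deriv:
  assumes "test_fun_01 \<psi>"
  shows "(LINT x:{0<..<1}|lborel. deriv \<psi> x) = 0"
proof -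
  obtain a b where ab: "0 < a" "b < 1" "\<forall>x. x \<notin> {a..b} \<longrightarrow> \<psi> x = 0"
    and C1: "\<psi> C1_differentiable_on UNIV"
    using assms unfolding test_fun_01_def by blast
  have "\<forall>x. \<psi> differentiable at x" and cont: "continuous_on UNIV (\<lambda>x. vector_derivative \<psi> (at x))"
    using C1 unfolding C1_differentiable_on_eq by auto
  then have D: "(\<psi> has_vector_derivative deriv \<psi> x) (at x)" for x
    using DERIV_deriv_iff_real_differentiable has_real_derivative_iff_has_vector_derivative by blast
  then have "vector_derivative \<psi> (at x) = deriv \<psi> x" for x
    by (rule vector_derivative_at)
  then have "continuous_on UNIV (deriv \<psi>)" using cont by (simp add: fun_eq_iff)
  then have "(LBINT x=ereal 0..ereal 1. deriv \<psi> x) = \<psi> 1 - \<psi> 0"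
    by (intro interval_integral_FTC_finite)
       (auto intro: continuous_on_subset has_vector_derivative_at_within[OF D])
  also have "\<dots> = 0" using ab by auto
  finally show ?thesis
    unfolding interval_lebesgue_integral_def by simp
qed

lemma H1_weak_deriv_const: "H1_weak_deriv (\<lambda>_. k) (\<lambda>_. 0)"
proof -
  have "L2_01 (\<lambda>_. k)" for k
    unfolding L2_01_def
    by (auto intro!: set_borel_measurable_continuous_on_01 set_integrable_continuous_on_01)
  then show ?thesis unfolding H1_weak_deriv_def
    by (simp add: test_fun_01_integral_deriv)
qed

definition weighted_mass :: "(real \<Rightarrow> real) \<Rightarrow> (real \<Rightarrow> real) \<Rightarrow> real" where
  "weighted_mass w \<phi> = (LINT r:{0<..<1}|lborel. w r * (\<phi> r)\<^sup>2)"

definition weighted_energy ::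
    "(real \<Rightarrow> real) \<Rightarrow> (real \<Rightarrow> real) \<Rightarrow> (real \<Rightarrow> real) \<Rightarrow> (real \<Rightarrow> real) \<Rightarrow> real" where
  "weighted_energy w c \<phi> g = (LINT r:{0<..<1}|lborel. w r * ((g r)\<^sup>2 + c r * (\<phi> r)\<^sup>2))"

definition normalized_energies :: "(real \<Rightarrow> real) \<Rightarrow> (real \<Rightarrow> real) \<Rightarrow> real set" where
  "normalized_energies w c =
     {weighted_energy w c \<phi> g | \<phi> g. H1_weak_deriv \<phi> g \<and> weighted_mass w \<phi> = 1}"

definition rayleigh_inf :: "(real \<Rightarrow> real) \<Rightarrow> (real \<Rightarrow> real) \<Rightarrow> real" where
  "rayleigh_inf w c = Inf (normalized_energies w c)"

lemma princ_eig_eq_rayleigh_inf: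
  "princ_eig d c s m = rayleigh_inf (\<lambda>r. r ^ (d - 1) * exp (2 * s * m r)) c"
  by (simp add: princ_eig_def rayleigh_inf_def normalized_energies_def
      weighted_energy_def weighted_mass_def)

lemma weighted_mass_scale: "weighted_mass w (\<lambda>x. a * \<phi> x) = a\<^sup>2 * weighted_mass w \<phi>"
  unfolding weighted_mass_def set_integral_mult_right[symmetric]
  by (simp add: power_mult_distrib mult_ac)

lemma weighted_energy_scale:
  "weighted_energy w c (\<lambda>x. a * \<phi> x) (\<lambda>x. a * g x) = a\<^sup>2 * weighted_energy w c \<phi> g"
  unfolding weighted_energy_def set_integral_mult_right[symmetric]
  by (simp add: power_mult_distrib algebra_simps)

lemma weighted_energy_nonneg:
  assumes "\<And>r. r \<in> {0<..<1} \<Longrightarrow> 0 \<le> w r \<and> 0 \<le> c r"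
  shows "0 \<le> weighted_energy w c \<phi> g"
  unfolding weighted_energy_def set_lebesgue_integral_def
  by (rule Bochner_Integration.integral_nonneg) (use assms in \<open>auto simp: indicator_def\<close>)

lemma H1_weak_deriv_integrable:
  assumes "H1_weak_deriv \<phi> g" "continuous_on {0..1} c"
  shows "set_integrable lborel {0<..<1} (\<lambda>r. (\<phi> r)\<^sup>2)"
    and "set_integrable lborel {0<..<1} (\<lambda>r. (g r)\<^sup>2 + c r * (\<phi> r)\<^sup>2)"
proof -
  show L2: "set_integrable lborel {0<..<1} (\<lambda>r. (\<phi> r)\<^sup>2)"
    using assms(1) unfolding H1_weak_deriv_def L2_01_def by auto
  have "set_integrable lborel {0<..<1} (\<lambda>r. (g r)\<^sup>2)"
    using assms(1) unfolding H1_weak_deriv_def L2_01_def by auto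
  then show "set_integrable lborel {0<..<1} (\<lambda>r. (g r)\<^sup>2 + c r * (\<phi> r)\<^sup>2)"
    using assms(2) L2 by (intro set_integral_add(1) set_integrable_continuous_on_mult_01)
qed

lemma set_integral_mono_weight_01:
  fixes u v f :: "real \<Rightarrow> real"
  assumes "continuous_on {0..1} u" "continuous_on {0..1} v" "set_integrable lborel {0<..<1} f"
    and "\<And>x. x \<in> {0<..<1} \<Longrightarrow> 0 \<le> f x \<and> u x \<le> v x"
  shows "(LINT x:{0<..<1}|lborel. u x * f x) \<le> (LINT x:{0<..<1}|lborel. v x * f x)"
  using assms by (intro set_integral_mono set_integrable_continuous_on_mult_01) (auto intro: mult_right_mono)

lemma quotient_in_normalized_energies:
  assumes "H1_weak_deriv \<phi> g" "0 < weighted_mass w \<phi>"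
  shows "weighted_energy w c \<phi> g / weighted_mass w \<phi> \<in> normalized_energies w c"
proof -
  define a where "a = 1 / sqrt (weighted_mass w \<phi>)"
  have "a\<^sup>2 = 1 / weighted_mass w \<phi>"
    unfolding a_def using assms(2) by (simp add: power_divide)
  then have "weighted_mass w (\<lambda>x. a * \<phi> x) = 1"
    and "weighted_energy w c (\<lambda>x. a * \<phi> x) (\<lambda>x. a * g x) = weighted_energy w c \<phi> g / weighted_mass w \<phi>"
    using assms(2) by (simp_all add: weighted_mass_scale weighted_energy_scale)
  then show ?thesis
    unfolding normalized_energies_def using H1_weak_deriv_scale[OF assms(1), of a] by force
qed

lemma rayleigh_inf_le_quotient:
  assumes "\<And>r. r \<in> {0<..<1} \<Longrightarrow> 0 \<le> w r \<and> 0 \<le> c r"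
    and "H1_weak_deriv \<phi> g" "0 < weighted_mass w \<phi>"
  shows "rayleigh_inf w c \<le> weighted_energy w c \<phi> g / weighted_mass w \<phi>"
proof -
  have "bdd_below (normalized_energies w c)"
    unfolding normalized_energies_def using weighted_energy_nonneg[of w c, OF assms(1)]
    by (intro bdd_belowI[of _ 0]) blast
  then show ?thesis
    unfolding rayleigh_inf_def using quotient_in_normalized_energies[OF assms(2,3)] by (rule cInf_lower[rotated])
qed

lemma weighted_mass_const_pos:
  assumes "continuous_on {0..1} w" "\<And>r. r \<in> {0<..<1} \<Longrightarrow> 0 < w r"
  shows "0 < weighted_mass w (\<lambda>_. 1)"
  unfolding weighted_mass_def using set_integral_pos_01[OF assms] by simp

lemma rayleigh_inf_le_bound:
  assumes w: "continuous_on {0..1} w" and c: "continuous_on {0..1} c"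
    and bounds: "\<And>r. r \<in> {0<..<1} \<Longrightarrow> 0 < w r \<and> 0 \<le> c r \<and> c r \<le> C"
  shows "rayleigh_inf w c \<le> C"
proof -
  have M: "0 < weighted_mass w (\<lambda>_. 1)"
    using bounds by (intro weighted_mass_const_pos[OF w]) blast
  have "weighted_energy w c (\<lambda>_. 1) (\<lambda>_. 0) = (LINT r:{0<..<1}|lborel. c r * w r)"
    unfolding weighted_energy_def by (simp add: mult.commute)
  also have "\<dots> \<le> (LINT r:{0<..<1}|lborel. C * w r)"
    by (rule set_integral_mono_weight_01)
      (use c w bounds in \<open>auto intro: set_integrable_continuous_on_01 less_imp_le\<close>)
  also have "\<dots> = C * weighted_mass w (\<lambda>_. 1)"
    unfolding weighted_mass_def by simp
  finally have "weighted_energy w c (\<lambda>_. 1) (\<lambda>_. 0) / weighted_mass w (\<lambda>_. 1) \<le> C"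
    using M by (simp add: divide_le_eq)
  moreover have "rayleigh_inf w c \<le> weighted_energy w c (\<lambda>_. 1) (\<lambda>_. 0) / weighted_mass w (\<lambda>_. 1)"
    using bounds by (intro rayleigh_inf_le_quotient H1_weak_deriv_const M) (auto simp: less_imp_le)
  ultimately show ?thesis by linarith
qed

lemma normalized_energies_nonempty:
  assumes "continuous_on {0..1} w" "\<And>r. r \<in> {0<..<1} \<Longrightarrow> 0 < w r"
  shows "normalized_energies w c \<noteq> {}"
  using quotient_in_normalized_energies[OF H1_weak_deriv_const weighted_mass_const_pos[OF assms]]
  by blast

lemma rayleigh_inf_weight_compare:
  assumes w1: "continuous_on {0..1} w1" and w2: "continuous_on {0..1} w2"
    and c: "continuous_on {0..1} c"
    and pos: "\<And>r. r \<in> {0<..<1} \<Longrightarrow> 0 < w1 r \<and> 0 \<le> c r"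
    and "0 < a" "0 < b"
    and bounds: "\<And>r. r \<in> {0<..<1} \<Longrightarrow> a * w1 r \<le> w2 r \<and> w2 r \<le> b * w1 r"
  shows "rayleigh_inf w2 c \<le> b / a * rayleigh_inf w1 c"
proof -
  have nonneg2: "0 \<le> w2 r \<and> 0 \<le> c r" if "r \<in> {0<..<1}" for r
    using pos[OF that] bounds[OF that] \<open>0 < a\<close>
    by (meson mult_pos_pos less_imp_le order_trans)
  have "a / b * rayleigh_inf w2 c \<le> E" if E_in: "E \<in> normalized_energies w1 c" for E
  proof -
    obtain \<phi> g where H: "H1_weak_deriv \<phi> g" and M1: "weighted_mass w1 \<phi> = 1"
      and E: "E = weighted_energy w1 c \<phi> g"
      using E_in unfolding normalized_energies_def by blast
    have "a * weighted_mass w1 \<phi> = (LINT r:{0<..<1}|lborel. (a * w1 r) * (\<phi> r)\<^sup>2)"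
      unfolding weighted_mass_def by (simp add: mult.assoc)
    also have "\<dots> \<le> weighted_mass w2 \<phi>"
      unfolding weighted_mass_def using H1_weak_deriv_integrable(1)[OF H c] w1 w2 bounds
      by (intro set_integral_mono_weight_01 continuous_intros) auto
    finally have M2: "a \<le> weighted_mass w2 \<phi>" using M1 by simp
    have "weighted_energy w2 c \<phi> g \<le> (LINT r:{0<..<1}|lborel. (b * w1 r) * ((g r)\<^sup>2 + c r * (\<phi> r)\<^sup>2))"
      unfolding weighted_energy_def using H1_weak_deriv_integrable(2)[OF H c] w1 w2 bounds pos
      by (intro set_integral_mono_weight_01 continuous_intros) auto
    also have "\<dots> = b * E"
      unfolding E weighted_energy_def by (simp add: mult.assoc)
    finally have E2: "weighted_energy w2 c \<phi> g \<le> b * E" .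
    have "rayleigh_inf w2 c \<le> weighted_energy w2 c \<phi> g / weighted_mass w2 \<phi>"
      using nonneg2 H M2 \<open>0 < a\<close> by (intro rayleigh_inf_le_quotient) auto
    also have "\<dots> \<le> weighted_energy w2 c \<phi> g / a"
      using M2 \<open>0 < a\<close> weighted_energy_nonneg[of w2 c, OF nonneg2] by (intro divide_left_mono) auto
    also have "\<dots> \<le> b * E / a"
      using E2 \<open>0 < a\<close> by (intro divide_right_mono) auto
    finally show ?thesis
      using \<open>0 < a\<close> \<open>0 < b\<close> by (simp add: field_simps)
  qed
  then have "a / b * rayleigh_inf w2 c \<le> rayleigh_inf w1 c"
    unfolding rayleigh_inf_def[of w1]
    using normalized_energies_nonempty[OF w1] pos by (intro cInf_greatest) auto
  then show ?thesis
    using \<open>0 < a\<close> \<open>0 < b\<close> by (simp add: field_simps)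
qed

lemma exp_weight_bounds:
  fixes s \<delta> p x y :: real
  assumes "0 \<le> s" "\<bar>x - y\<bar> \<le> \<delta>" "0 \<le> p"
  shows "exp (- (2 * s * \<delta>)) * (p * exp (2 * s * x)) \<le> p * exp (2 * s * y)"
    and "p * exp (2 * s * y) \<le> exp (2 * s * \<delta>) * (p * exp (2 * s * x))"
proof -
  have split: "p * exp (2 * s * y) = exp (2 * s * (y - x)) * (p * exp (2 * s * x))"
    by (simp add: exp_add[symmetric] algebra_simps)
  have "2 * s * (- \<delta>) \<le> 2 * s * (y - x)" "2 * s * (y - x) \<le> 2 * s * \<delta>"
    using assms(1,2) by (intro mult_left_mono; simp add: abs_le_iff)+
  then show "exp (- (2 * s * \<delta>)) * (p * exp (2 * s * x)) \<le> p * exp (2 * s * y)"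
    and "p * exp (2 * s * y) \<le> exp (2 * s * \<delta>) * (p * exp (2 * s * x))"
    unfolding split using assms(3) by (auto intro!: mult_right_mono)
qed

lemma princ_eig_le_exp_mult:
  assumes c: "continuous_on {0..1} c" "\<forall>x\<in>{0<..<1}. 0 \<le> c x" and "0 \<le> s"
    and m: "continuous_on {0..1} m1" "continuous_on {0..1} m2"
    and dist: "\<forall>x\<in>{0..1}. \<bar>m1 x - m2 x\<bar> \<le> \<delta>"
  shows "princ_eig d c s m2 \<le> exp (4 * s * \<delta>) * princ_eig d c s m1"
proof -
  have "rayleigh_inf (\<lambda>r. r ^ (d - 1) * exp (2 * s * m2 r)) c
      \<le> exp (2 * s * \<delta>) / exp (- (2 * s * \<delta>))
          * rayleigh_inf (\<lambda>r. r ^ (d - 1) * exp (2 * s * m1 r)) c"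
    using c m dist exp_weight_bounds[OF \<open>0 \<le> s\<close>]
    by (intro rayleigh_inf_weight_compare continuous_intros) auto
  moreover have "exp (2 * s * \<delta>) / exp (- (2 * s * \<delta>)) = exp (4 * s * \<delta>)"
    by (simp add: exp_diff[symmetric])
  ultimately show ?thesis by (simp add: princ_eig_eq_rayleigh_inf)
qed

lemma princ_eig_le_bound:
  assumes "continuous_on {0..1} c" "\<forall>x\<in>{0<..<1}. 0 \<le> c x \<and> c x \<le> C"
    and "continuous_on {0..1} m"
  shows "princ_eig d c s m \<le> C"
  unfolding princ_eig_eq_rayleigh_inf
  using assms by (intro rayleigh_inf_le_bound continuous_intros) auto

theorem lemma4p1:
  fixes d :: nat and c m1 m2 :: "real \<Rightarrow> real" and s :: real
  assumes "d \<ge> 1"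
    and "continuous_on {0..1} c" and "\<forall>x\<in>{0..1}. c x > 0"
    and "s > 0"
    and "C1_01 m1" and "C1_01 m2"
  shows "\<bar>princ_eig d c s m1 - princ_eig d c s m2\<bar>
           \<le> Sup (c ` {0..1}) * (exp (4 * s * sup_norm_01 (\<lambda>x. m1 x - m2 x)) - 1)"
proof -
  define \<delta> where "\<delta> = sup_norm_01 (\<lambda>x. m1 x - m2 x)"
  define C where "C = Sup (c ` {0..1})"
  define q where "q = exp (4 * s * \<delta>)"
  have m: "continuous_on {0..1} m1" "continuous_on {0..1} m2"
    using assms(5,6) by (simp_all add: C1_01_imp_continuous_on)
  have dist: "\<forall>x\<in>{0..1}. \<bar>m1 x - m2 x\<bar> \<le> \<delta>" "\<forall>x\<in>{0..1}. \<bar>m2 x - m1 x\<bar> \<le> \<delta>"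
    unfolding \<delta>_def using m by (auto intro!: abs_le_sup_norm_01 continuous_intros simp: abs_minus_commute)
  then have "0 \<le> \<delta>" by (force intro: order_trans[OF abs_ge_zero])
  then have "1 \<le> q" unfolding q_def using \<open>s > 0\<close> by simp
  have c: "\<forall>x\<in>{0<..<1}. 0 \<le> c x \<and> c x \<le> C"
    unfolding C_def using assms(2,3) by (auto intro: continuous_on_compact_le_Sup less_imp_le)
  have "y - x \<le> (q - 1) * C" if "y \<le> q * x" "x \<le> C" for x y
  proof -
    have "y - x \<le> (q - 1) * x" using that(1) by (simp add: algebra_simps)
    also have "\<dots> \<le> (q - 1) * C" using that(2) \<open>1 \<le> q\<close> by (intro mult_left_mono) auto
    finally show ?thesis .
  qed
  moreover have "princ_eig d c s m1 \<le> C" "princ_eig d c s m2 \<le> C"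
    using assms(2) c m by (auto intro: princ_eig_le_bound)
  moreover have "princ_eig d c s m2 \<le> q * princ_eig d c s m1" "princ_eig d c s m1 \<le> q * princ_eig d c s m2"
    unfolding q_def using assms(2,4) c m dist by (auto intro!: princ_eig_le_exp_mult)
  ultimately have "princ_eig d c s m2 - princ_eig d c s m1 \<le> (q - 1) * C"
    and "princ_eig d c s m1 - princ_eig d c s m2 \<le> (q - 1) * C"
    by blast+
  then show ?thesis unfolding C_def q_def \<delta>_def by (simp add: abs_le_iff mult.commute)
qed

end
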